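(* Let $s\ge 2$ and $t\ge 2$ be integers, $p=st$, and let $\xi_1,\dots,\xi_s$ be positive integers with $\binom{p-t}{(r-1)t+1}\xi_r=\binom{p-t}{rt}\xi_{r+1}$ for $2\le r\le s-1$ and $(s-1)\xi_1=\binom{p-t}{t}\xi_2$. Let $\mathcal{C}$ be the array code (over a finite field $\mathbb{F}$, with $t$ rows, entries in $\mathbb{F}^p$ with basis $x_1,\dots,x_p$) whose columns are: (Type $T_1$) for each $t$-subset $A\subseteq\{1,\dots,p\}$, $\xi_1$ columns with cells $x_a$, $a\in A$; and (Type $T_r$, for each $2\le r\le s$) for each $(t-1)$-subset $B\subseteq\{1,\dots,p\}$ and each $((r-1)t+1)$-subset $C\subseteq\{1,\dots,p\}\setminus B$, $\xi_r$ columns whose cells are $x_b$ for $b\in B$ together with one cell $\sum_{c\in C}x_c$. Let $m$ be the number of columns of $\mathcal{C}$. Then $\mathcal{C}$ is a $[t\times m,p]$ $k$-PIR array code with PIR rate $k/m=(\beta+\gamma)/(\beta+2\gamma)$, where \[ \beta=\xi_1(p-t+1)+\sum_{r=2}^{s}(t-1)\xi_r\binom{p-t+1}{(r-1)t+1},\qquad \gamma=(p-t+1)\sum_{r=1}^{s-1}\xi_{r+1}\binom{p-t}{rt}. \]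
   Context: A $[t\times m,p]$ array code is a $t\times m$ array whose entries are linear combinations of a basis $x_1,\dots,x_p$ of $\mathbb{F}^p$. It has the $k$-PIR property (is a $k$-PIR array code) if for every $i$ there exist $k$ pairwise disjoint sets $S_1,\dots,S_k$ of columns such that for each $j$ the vector $x_i$ lies in the span of all entries of the columns in $S_j$. Its PIR rate is $k/m$. *)

theory Defs
  imports Complex_Main "HOL-Library.Multiset"
begin

text \<open>Vectors of F^p are modelled as functions nat => F; only the coordinates
  1..p are used. The basis vector x_a is the indicator of coordinate a.\<close>

definition basis_vec :: "nat \<Rightarrow> (nat \<Rightarrow> 'a::field)" where
  "basis_vec a = (\<lambda>i. if i = a then 1 else 0)"

definition lin_span :: "(nat \<Rightarrow> 'a::field) set \<Rightarrow> (nat \<Rightarrow> 'a) set" where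
  "lin_span S = {v. \<exists>T c. finite T \<and> T \<subseteq> S \<and> v = (\<lambda>i. \<Sum>u\<in>T. c u * u i)}"

text \<open>An array code is a list of columns; each column is the list of its cells
  (top to bottom). The k-PIR property for message length p.\<close>
definition is_kPIR :: "nat \<Rightarrow> (nat \<Rightarrow> 'a::field) list list \<Rightarrow> nat \<Rightarrow> bool" where
  "is_kPIR p cols k \<longleftrightarrow>
     (\<forall>i\<in>{1..p}. \<exists>S :: nat \<Rightarrow> nat set.
        (\<forall>j<k. S j \<subseteq> {..<length cols}) \<and>
        (\<forall>j<k. \<forall>j'<k. j \<noteq> j' \<longrightarrow> S j \<inter> S j' = {}) \<and>
        (\<forall>j<k. basis_vec i \<in> lin_span (\<Union>c\<in>S j. set (cols ! c))))"

definition is_array_code :: "nat \<Rightarrow> nat \<Rightarrow> (nat \<Rightarrow> 'a::field) list list \<Rightarrow> bool" where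
  "is_array_code t p cols \<longleftrightarrow>
     (\<forall>col\<in>set cols. length col = t \<and> (\<forall>v\<in>set col. \<forall>i. i \<notin> {1..p} \<longrightarrow> v i = 0))"

definition theorem8_columns ::
  "nat \<Rightarrow> nat \<Rightarrow> (nat \<Rightarrow> nat) \<Rightarrow> (nat \<Rightarrow> 'a::field) list multiset" where
  "theorem8_columns s t \<xi> =
     (let p = s * t in
      (\<Sum>A\<in>{A. A \<subseteq> {1..p} \<and> card A = t}.
          replicate_mset (\<xi> 1) (map basis_vec (sorted_list_of_set A)))
    + (\<Sum>r\<in>{2..s}. \<Sum>B\<in>{B. B \<subseteq> {1..p} \<and> card B = t - 1}.
         \<Sum>C\<in>{C. C \<subseteq> {1..p} - B \<and> card C = (r - 1) * t + 1}.
          replicate_mset (\<xi> r)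
            (map basis_vec (sorted_list_of_set B) @
               [(\<lambda>i. \<Sum>c\<in>C. basis_vec c i)])))"

end

theory Submission
  imports Defs
begin

text \<open>Fix a coordinate \<open>i\<close>. Every column either has \<open>x\<^sub>i\<close> as a cell, or has \<open>i\<close> in its
  sum cell but not among its unit cells, or avoids \<open>i\<close>. An avoiding column spans the sum
  \<open>x\<^sub>K\<close> of the \<open>x\<^sub>k\<close> over its support \<open>K\<close>, where \<open>|K| = rt\<close> with \<open>r < s\<close>; a column whose
  sum cell is \<open>K \<union> {i}\<close> contains \<open>x\<^sub>i + x\<^sub>K\<close>, so the two together recover \<open>x\<^sub>i\<close>. The
  relations between the \<open>\<xi>\<^sub>r\<close> say precisely that for every key \<open>K\<close> there are as many
  avoiding columns as sum-cell columns with that key, so the two kinds can be matched. The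
  singletons of the first kind and the matched pairs give \<open>k = D + U\<close> disjoint recovery sets
  for every \<open>i\<close>, where \<open>D\<close> and \<open>U\<close> count the columns of the first and second kind, while
  \<open>m = D + 2U\<close>; counting \<open>D\<close> and \<open>U\<close> gives the rate.\<close>

section \<open>Linear spans\<close>

lemma lin_span_base: "v \<in> S \<Longrightarrow> v \<in> lin_span S"
  unfolding lin_span_def by (intro CollectI exI[of _ "{v}"] exI[of _ "\<lambda>_. 1"]) auto

lemma lin_span_zero: "(\<lambda>i. 0) \<in> lin_span S"
  unfolding lin_span_def by (intro CollectI exI[of _ "{}"]) auto

lemma lin_span_mono: "S \<subseteq> S' \<Longrightarrow> lin_span S \<subseteq> lin_span S'"
  unfolding lin_span_def by blast

lemma lin_span_add:
  assumes "u \<in> lin_span S" "v \<in> lin_span S"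
  shows "(\<lambda>i. u i + v i) \<in> lin_span S"
proof -
  obtain T1 c1 where T1: "finite T1" "T1 \<subseteq> S" "u = (\<lambda>i. \<Sum>w\<in>T1. c1 w * w i)"
    using assms(1) unfolding lin_span_def by blast
  obtain T2 c2 where T2: "finite T2" "T2 \<subseteq> S" "v = (\<lambda>i. \<Sum>w\<in>T2. c2 w * w i)"
    using assms(2) unfolding lin_span_def by blast
  define c where "c w = (if w \<in> T1 then c1 w else 0) + (if w \<in> T2 then c2 w else 0)" for w
  have "u i + v i = (\<Sum>w\<in>T1 \<union> T2. c w * w i)" for i
  proof -
    have "(\<Sum>w\<in>T1 \<union> T2. (if w \<in> T1 then c1 w else 0) * w i) = (\<Sum>w\<in>T1. c1 w * w i)"
      by (rule sum.mono_neutral_cong_right) (use T1 T2 in auto)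
    moreover have "(\<Sum>w\<in>T1 \<union> T2. (if w \<in> T2 then c2 w else 0) * w i) = (\<Sum>w\<in>T2. c2 w * w i)"
      by (rule sum.mono_neutral_cong_right) (use T1 T2 in auto)
    ultimately show ?thesis
      unfolding c_def distrib_right sum.distrib T1(3) T2(3) by simp
  qed
  then show ?thesis
    unfolding lin_span_def using T1 T2 by (intro CollectI exI[of _ "T1 \<union> T2"] exI[of _ c]) auto
qed

lemma lin_span_scale:
  assumes "u \<in> lin_span S"
  shows "(\<lambda>i. a * u i) \<in> lin_span S"
proof -
  obtain T c where T: "finite T" "T \<subseteq> S" "u = (\<lambda>i. \<Sum>w\<in>T. c w * w i)"
    using assms unfolding lin_span_def by blast
  have "(\<lambda>i. a * u i) = (\<lambda>i. \<Sum>w\<in>T. (a * c w) * w i)"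
    unfolding T(3) sum_distrib_left by (simp only: mult.assoc)
  then show ?thesis
    unfolding lin_span_def using T(1,2) by (intro CollectI exI[of _ T] exI[of _ "\<lambda>w. a * c w"]) auto
qed

lemma lin_span_diff:
  assumes "u \<in> lin_span S" "v \<in> lin_span S"
  shows "(\<lambda>i. u i - v i) \<in> lin_span S"
  using lin_span_add[OF assms(1) lin_span_scale[OF assms(2), of "-1"]] by simp

lemma lin_span_sum:
  assumes "finite X" "\<And>x. x \<in> X \<Longrightarrow> f x \<in> lin_span S"
  shows "(\<lambda>i. \<Sum>x\<in>X. f x i) \<in> lin_span S"
  using assms
proof (induction X rule: finite_induct)
  case empty
  then show ?case using lin_span_zero by simp
next
  case (insert x X)
  then show ?case using lin_span_add[of "f x" S "\<lambda>i. \<Sum>x\<in>X. f x i"] by simp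
qed

definition basis_sum :: "nat set \<Rightarrow> nat \<Rightarrow> 'a::field" where
  "basis_sum C = (\<lambda>i. \<Sum>c\<in>C. basis_vec c i)"

lemma basis_sum_apply: "finite C \<Longrightarrow> basis_sum C i = (if i \<in> C then 1 else 0)"
  unfolding basis_sum_def basis_vec_def by simp

lemma basis_sum_singleton: "basis_sum {a} = basis_vec a"
  unfolding basis_sum_def by simp

lemma basis_sum_inject:
  assumes "finite C" "finite C'"
  shows "(basis_sum C :: nat \<Rightarrow> 'a::field) = basis_sum C' \<longleftrightarrow> C = C'"
proof
  assume eq: "(basis_sum C :: nat \<Rightarrow> 'a) = basis_sum C'"
  show "C = C'"
  proof (rule set_eqI)
    fix x
    show "x \<in> C \<longleftrightarrow> x \<in> C'"
      using fun_cong[OF eq, of x] by (auto simp: basis_sum_apply assms split: if_splits)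
  qed
qed simp

lemma basis_vec_inject: "(basis_vec a :: nat \<Rightarrow> 'a::field) = basis_vec b \<longleftrightarrow> a = b"
  using basis_sum_inject[of "{a}" "{b}"] by (simp add: basis_sum_singleton)

lemma inj_basis_vec: "inj (basis_vec :: nat \<Rightarrow> nat \<Rightarrow> 'a::field)"
  by (rule injI) (simp add: basis_vec_inject)

lemma basis_sum_in_lin_span:
  "finite C \<Longrightarrow> basis_vec ` C \<subseteq> S \<Longrightarrow> (basis_sum C :: nat \<Rightarrow> 'a::field) \<in> lin_span S"
  unfolding basis_sum_def by (intro lin_span_sum) (auto intro: lin_span_base)

lemma basis_sum_Un:
  "finite B \<Longrightarrow> finite C \<Longrightarrow> B \<inter> C = {} \<Longrightarrow>
    basis_sum (B \<union> C) = (\<lambda>i. basis_sum B i + (basis_sum C i :: 'a::field))"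
  unfolding basis_sum_def by (simp add: sum.union_disjoint)

section \<open>Disjoint recovery sets\<close>

definition recovers :: "(nat \<Rightarrow> 'a::field) list list \<Rightarrow> nat \<Rightarrow> nat set \<Rightarrow> bool" where
  "recovers cols i X \<longleftrightarrow> basis_vec i \<in> lin_span (\<Union>c\<in>X. set (cols ! c))"

definition has_disjoint_recovery_sets :: "(nat \<Rightarrow> 'a::field) list list \<Rightarrow> nat \<Rightarrow> nat \<Rightarrow> bool" where
  "has_disjoint_recovery_sets cols i k \<longleftrightarrow> (\<exists>S :: nat \<Rightarrow> nat set.
     (\<forall>j<k. S j \<subseteq> {..<length cols}) \<and>
     (\<forall>j<k. \<forall>j'<k. j \<noteq> j' \<longrightarrow> S j \<inter> S j' = {}) \<and>
     (\<forall>j<k. recovers cols i (S j)))"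

lemma is_kPIR_iff: "is_kPIR p cols k \<longleftrightarrow> (\<forall>i\<in>{1..p}. has_disjoint_recovery_sets cols i k)"
  unfolding is_kPIR_def has_disjoint_recovery_sets_def recovers_def ..

lemma has_disjoint_recovery_sets_from_matching:
  assumes "finite D" "finite L" "D \<inter> L = {}" "inj_on g L" "g ` L \<inter> (D \<union> L) = {}"
    and "D \<union> L \<union> g ` L \<subseteq> {..<length cols}"
    and "\<And>a. a \<in> D \<Longrightarrow> recovers cols i {a}"
    and "\<And>a. a \<in> L \<Longrightarrow> recovers cols i {a, g a}"
  shows "has_disjoint_recovery_sets cols i (card D + card L)"
proof -
  define R where "R a = (if a \<in> D then {a} else {a, g a})" for a
  have R_cases: "x = a \<or> (a \<in> L \<and> x = g a)" if "x \<in> R a" "a \<in> D \<union> L" for x a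
    using that unfolding R_def by (cases "a \<in> D") auto
  have disjoint: "R a \<inter> R b = {}" if ab: "a \<in> D \<union> L" "b \<in> D \<union> L" "a \<noteq> b" for a b
  proof (rule equals0I)
    fix x assume "x \<in> R a \<inter> R b"
    then have "x = a \<or> (a \<in> L \<and> x = g a)" "x = b \<or> (b \<in> L \<and> x = g b)"
      using R_cases ab by blast+
    moreover have "g c \<notin> D \<union> L" if "c \<in> L" for c
      using assms(5) that by blast
    ultimately show False using ab inj_onD[OF assms(4)] by metis
  qed
  have "card (D \<union> L) = card D + card L"
    using assms(1-3) by (rule card_Un_disjoint)
  then obtain h where h: "bij_betw h {0..<card D + card L} (D \<union> L)"
    using ex_bij_betw_nat_finite[of "D \<union> L"] assms(1,2) by auto
  show ?thesis
    unfolding has_disjoint_recovery_sets_def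
  proof (intro exI[of _ "R \<circ> h"] conjI allI impI)
    fix j assume "j < card D + card L"
    then have hj: "h j \<in> D \<union> L" using bij_betwE[OF h] by simp
    show "(R \<circ> h) j \<subseteq> {..<length cols}" using hj assms(6) by (auto simp: R_def)
    show "recovers cols i ((R \<circ> h) j)" using hj assms(3,7,8) by (auto simp: R_def)
  next
    fix j j' assume "j < card D + card L" "j' < card D + card L" "j \<noteq> j'"
    then have "h j \<in> D \<union> L" "h j' \<in> D \<union> L" "h j \<noteq> h j'"
      using bij_betwE[OF h] inj_onD[OF bij_betw_imp_inj_on[OF h], of j j'] by auto
    then show "(R \<circ> h) j \<inter> (R \<circ> h) j' = {}" using disjoint by simp
  qed
qed

lemma ex_bij_betw_equal_fibres:
  assumes "finite L" "finite U" "\<And>x. card {a\<in>L. f a = x} = card {b\<in>U. g b = x}"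
  shows "\<exists>h. bij_betw h L U \<and> (\<forall>a\<in>L. g (h a) = f a)"
proof -
  have "\<forall>x. \<exists>hx. bij_betw hx {a\<in>L. f a = x} {b\<in>U. g b = x}"
    using assms by (auto intro: finite_same_card_bij)
  then obtain H where H: "\<And>x. bij_betw (H x) {a\<in>L. f a = x} {b\<in>U. g b = x}"
    by metis
  define h where "h a = H (f a) a" for a
  have h: "h a \<in> U \<and> g (h a) = f a" if "a \<in> L" for a
    using bij_betwE[OF H[of "f a"]] that unfolding h_def by simp
  have "inj_on h L"
  proof (rule inj_onI)
    fix a a' assume a: "a \<in> L" "a' \<in> L" "h a = h a'"
    then have "f a' = f a" using h by metis
    then show "a = a'"
      using a inj_onD[OF bij_betw_imp_inj_on[OF H[of "f a"]], of a a'] unfolding h_def by simp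
  qed
  moreover have "U \<subseteq> h ` L"
  proof
    fix b assume "b \<in> U"
    then have "b \<in> H (g b) ` {a\<in>L. f a = g b}"
      using bij_betw_imp_surj_on[OF H[of "g b"]] by blast
    then show "b \<in> h ` L" unfolding h_def by force
  qed
  ultimately show ?thesis using h unfolding bij_betw_def by blast
qed

lemma filter_mset_sum: "filter_mset P (\<Sum>d\<in>D. M d) = (\<Sum>d\<in>D. filter_mset P (M d))"
  by (induction D rule: infinite_finite_induct) auto

lemma filter_replicate_mset:
  "filter_mset P (replicate_mset n x) = (if P x then replicate_mset n x else {#})"
  by (induction n) auto

lemma card_nth_mem_image_sum_replicate:
  assumes xs: "mset xs = (\<Sum>d\<in>D. replicate_mset (w d) (f d))"
    and "finite D" "inj_on f D" "D' \<subseteq> D"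
  shows "card {c. c < length xs \<and> xs ! c \<in> f ` D'} = (\<Sum>d\<in>D'. w d)"
proof -
  have "card {c. c < length xs \<and> xs ! c \<in> f ` D'} = length (filter (\<lambda>v. v \<in> f ` D') xs)"
    by (simp add: length_filter_conv_card)
  also have "\<dots> = size (filter_mset (\<lambda>v. v \<in> f ` D') (mset xs))"
    by (metis mset_filter size_mset)
  also have "\<dots> = (\<Sum>d\<in>D. if d \<in> D' then w d else 0)"
    unfolding xs filter_mset_sum size_multiset_sum using assms(3,4)
      by (intro sum.cong) (auto simp: filter_replicate_mset inj_on_image_mem_iff)
  also have "\<dots> = (\<Sum>d\<in>D'. w d)"
    using assms(2,4) by (simp add: sum.inter_restrict[symmetric] Int_absorb1)
  finally show ?thesis .
qed

lemma sum_if_const: "finite X \<Longrightarrow> (\<Sum>x\<in>X. if P x then c else 0) = card {x\<in>X. P x} * c"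
  by (simp add: sum.inter_filter[symmetric])

lemma card_subsets_containing:
  assumes "finite X" "i \<in> X"
  shows "card {A. A \<subseteq> X \<and> card A = Suc k \<and> i \<in> A} = (card X - 1) choose k"
proof -
  have fin: "finite A" if "A \<subseteq> X" for A
    using finite_subset[OF that assms(1)] .
  have "{A. A \<subseteq> X \<and> card A = Suc k \<and> i \<in> A} = insert i ` {A. A \<subseteq> X - {i} \<and> card A = k}"
  proof (intro set_eqI iffI)
    fix A assume A: "A \<in> {A. A \<subseteq> X \<and> card A = Suc k \<and> i \<in> A}"
    then have "A = insert i (A - {i})" "A - {i} \<in> {A. A \<subseteq> X - {i} \<and> card A = k}"
      using fin by auto
    then show "A \<in> insert i ` {A. A \<subseteq> X - {i} \<and> card A = k}" by blast
  next
    fix A assume "A \<in> insert i ` {A. A \<subseteq> X - {i} \<and> card A = k}"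
    then obtain A' where A': "A = insert i A'" "A' \<subseteq> X - {i}" "card A' = k" by blast
    then have "finite A'" "i \<notin> A'" using fin by auto
    then show "A \<in> {A. A \<subseteq> X \<and> card A = Suc k \<and> i \<in> A}"
      using A' assms(2) by auto
  qed
  moreover have "inj_on (insert i) {A. A \<subseteq> X - {i} \<and> card A = k}"
    by (rule inj_onI) blast
  ultimately show ?thesis using assms by (simp add: card_image n_subsets)
qed

lemma choose_mult_disjoint:
  "(n choose k) * ((n - k) choose j) = (n choose (k + j)) * ((k + j) choose j)"
proof (cases "k + j \<le> n")
  case True
  then show ?thesis
    using choose_mult[of k "k + j" n] binomial_symmetric[of j "k + j"] by simp
next
  case False
  then have "(n choose k) * ((n - k) choose j) = 0"
    by (cases "k \<le> n") auto
  moreover have "n choose (k + j) = 0" using False by simp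
  ultimately show ?thesis by (metis mult_0)
qed

lemma binomial_shift_absorb:
  "0 < k \<Longrightarrow> n * ((n - 1) choose (k - 1)) = k * (n choose k)"
  using binomial_absorption[of "k - 1" n] by simp

section \<open>The columns of the code\<close>

text \<open>A column of type \<open>T\<^sub>1\<close> with cell set \<open>A\<close> is described by the triple \<open>(1, {}, A)\<close>,
  a column of type \<open>T\<^sub>r\<close>, \<open>r \<ge> 2\<close>, by \<open>(r, B, C)\<close>.\<close>

definition column :: "nat \<times> nat set \<times> nat set \<Rightarrow> (nat \<Rightarrow> 'a::field) list" where
  "column = (\<lambda>(r, B, C). if r = 1 then map basis_vec (sorted_list_of_set C)
     else map basis_vec (sorted_list_of_set B) @ [basis_sum C])"

lemma column_r: "r \<noteq> 1 \<Longrightarrow> column (r, B, C) = map basis_vec (sorted_list_of_set B) @ [basis_sum C]"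
  unfolding column_def by simp

lemma set_column_1: "finite C \<Longrightarrow> set (column (1, B, C)) = basis_vec ` C"
  by (simp add: column_def)

lemma map_basis_vec_sorted_inject:
  "finite A \<Longrightarrow> finite A' \<Longrightarrow>
    (map basis_vec (sorted_list_of_set A) :: (nat \<Rightarrow> 'a::field) list) = map basis_vec (sorted_list_of_set A')
    \<longleftrightarrow> A = A'"
  using sorted_list_of_set_inject by (auto simp: inj_map_eq_map[OF inj_basis_vec])

lemma basis_sum_notin_basis_vec_image:
  "finite C \<Longrightarrow> 2 \<le> card C \<Longrightarrow> (basis_sum C :: nat \<Rightarrow> 'a::field) \<notin> basis_vec ` A"
  by (auto simp flip: basis_sum_singleton simp: basis_sum_inject)

definition cell_contains :: "nat \<Rightarrow> nat \<times> nat set \<times> nat set \<Rightarrow> bool" where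
  "cell_contains i = (\<lambda>(r, B, C). if r = 1 then i \<in> C else i \<in> B)"

definition sum_contains :: "nat \<Rightarrow> nat \<times> nat set \<times> nat set \<Rightarrow> bool" where
  "sum_contains i = (\<lambda>(r, B, C). r \<noteq> 1 \<and> i \<notin> B \<and> i \<in> C)"

definition avoids :: "nat \<Rightarrow> nat \<times> nat set \<times> nat set \<Rightarrow> bool" where
  "avoids i d \<longleftrightarrow> \<not> cell_contains i d \<and> \<not> sum_contains i d"

definition avoid_key :: "nat \<times> nat set \<times> nat set \<Rightarrow> nat set" where
  "avoid_key = (\<lambda>(r, B, C). B \<union> C)"

definition sum_key :: "nat \<Rightarrow> nat \<times> nat set \<times> nat set \<Rightarrow> nat set" where
  "sum_key i = (\<lambda>(r, B, C). C - {i})"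

lemma sum_contains_not_cell_contains: "sum_contains i d \<Longrightarrow> \<not> cell_contains i d"
  by (cases d) (simp add: cell_contains_def sum_contains_def)

declare binomial_Suc_Suc [simp del] \<comment> \<open>keeps \<open>Suc n choose Suc k\<close> from being split into two binomials\<close>

locale theorem8_descriptors =
  fixes s t :: nat
  assumes s_ge_2: "2 \<le> s" and t_ge_2: "2 \<le> t"
begin

definition As :: "nat set set" where
  "As = {A. A \<subseteq> {1..s*t} \<and> card A = t}"

definition Bs :: "nat set set" where
  "Bs = {B. B \<subseteq> {1..s*t} \<and> card B = t - 1}"

definition Cs :: "nat \<Rightarrow> nat set \<Rightarrow> nat set set" where
  "Cs r B = {C. C \<subseteq> {1..s*t} - B \<and> card C = (r - 1) * t + 1}"

definition descriptors :: "(nat \<times> nat set \<times> nat set) set" where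
  "descriptors = (\<lambda>A. (1, {}, A)) ` As \<union> (SIGMA r:{2..s}. SIGMA B:Bs. Cs r B)"

lemma finite_As: "finite As"
  unfolding As_def by (rule finite_subset[of _ "Pow {1..s*t}"]) auto

lemma finite_Bs: "finite Bs"
  unfolding Bs_def by (rule finite_subset[of _ "Pow {1..s*t}"]) auto

lemma finite_Cs: "finite (Cs r B)"
  unfolding Cs_def by (rule finite_subset[of _ "Pow {1..s*t}"]) auto

lemma finite_descriptors: "finite descriptors"
  unfolding descriptors_def using finite_As finite_Bs finite_Cs by auto

lemma mem_descriptors_iff:
  "(r, B, C) \<in> descriptors \<longleftrightarrow>
     r = 1 \<and> B = {} \<and> C \<subseteq> {1..s*t} \<and> card C = t \<or>
     2 \<le> r \<and> r \<le> s \<and> B \<subseteq> {1..s*t} \<and> card B = t - 1 \<and> C \<subseteq> {1..s*t} - B \<and>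
       card C = (r - 1) * t + 1"
  unfolding descriptors_def As_def Bs_def Cs_def by auto

lemma descriptors_subset: "(r, B, C) \<in> descriptors \<Longrightarrow> B \<union> C \<subseteq> {1..s*t}"
  by (auto simp: mem_descriptors_iff)

lemma descriptors_finite_sets:
  assumes "(r, B, C) \<in> descriptors"
  shows "finite B \<and> finite C"
proof -
  have "finite (B \<union> C)" using descriptors_subset[OF assms] by (rule finite_subset) simp
  then show ?thesis by simp
qed

lemma descriptors_disjoint: "(r, B, C) \<in> descriptors \<Longrightarrow> B \<inter> C = {}"
  by (auto simp: mem_descriptors_iff)

lemma sum_descriptors:
  "(\<Sum>d\<in>descriptors. f d) = (\<Sum>A\<in>As. f (1, {}, A)) + (\<Sum>r=2..s. \<Sum>B\<in>Bs. \<Sum>C\<in>Cs r B. f (r, B, C))"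
proof -
  have "(\<Sum>d\<in>(\<lambda>A. (1, {}, A)) ` As. f d) = (\<Sum>A\<in>As. f (1, {}, A))"
    by (subst sum.reindex) (auto simp: inj_on_def)
  moreover have "(\<Sum>d\<in>(SIGMA r:{2..s}. SIGMA B:Bs. Cs r B). f d)
      = (\<Sum>r=2..s. \<Sum>B\<in>Bs. \<Sum>C\<in>Cs r B. f (r, B, C))"
    using finite_Bs finite_Cs by (simp add: sum.Sigma)
  ultimately show ?thesis
    unfolding descriptors_def using finite_As finite_Bs finite_Cs
    by (subst sum.union_disjoint) auto
qed

lemma card_sum_cell_ge:
  assumes "(r, B, C) \<in> descriptors" "r \<noteq> 1"
  shows "t + 1 \<le> card C"
proof -
  have "2 \<le> r" "card C = (r - 1) * t + 1" using assms by (auto simp: mem_descriptors_iff)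
  moreover have "1 * t \<le> (r - 1) * t" using \<open>2 \<le> r\<close> by (intro mult_le_mono1) simp
  ultimately show ?thesis by simp
qed

lemma column_type1_neq:
  assumes "(r, B, C) \<in> descriptors" "r \<noteq> 1" "finite A"
  shows "(column (1, B', A) :: (nat \<Rightarrow> 'a::field) list) \<noteq> column (r, B, C)"
proof
  assume eq: "(column (1, B', A) :: (nat \<Rightarrow> 'a) list) = column (r, B, C)"
  have "(basis_sum C :: nat \<Rightarrow> 'a) \<in> set (column (r, B, C))"
    using assms(2) by (simp add: column_r)
  then have "(basis_sum C :: nat \<Rightarrow> 'a) \<in> basis_vec ` A"
    unfolding eq[symmetric] set_column_1[OF assms(3)] .
  moreover have "finite C" "2 \<le> card C"
    using descriptors_finite_sets[OF assms(1)] card_sum_cell_ge[OF assms(1,2)] t_ge_2 by auto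
  ultimately show False using basis_sum_notin_basis_vec_image by blast
qed

lemma inj_on_column: "inj_on (column :: _ \<Rightarrow> (nat \<Rightarrow> 'a::field) list) descriptors"
proof (rule inj_onI)
  fix d d' assume d: "d \<in> descriptors" "d' \<in> descriptors"
    and eq: "(column d :: (nat \<Rightarrow> 'a) list) = column d'"
  obtain r B C r' B' C' where dd: "d = (r, B, C)" "d' = (r', B', C')"
    using prod_cases3 by metis
  have fin: "finite B" "finite C" "finite B'" "finite C'"
    using d descriptors_finite_sets unfolding dd by auto
  consider "r = 1" "r' = 1" | "r = 1" "r' \<noteq> 1" | "r \<noteq> 1" "r' = 1" | "r \<noteq> 1" "r' \<noteq> 1"
    by blast
  then show "d = d'"
  proof cases
    case 1
    have "B = {}" "B' = {}"
      using d unfolding dd 1 by (auto simp: mem_descriptors_iff)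
    moreover have "C = C'"
      using eq fin unfolding dd 1 by (simp add: column_def map_basis_vec_sorted_inject)
    ultimately show ?thesis using 1 unfolding dd by simp
  next
    case 2
    then show ?thesis using column_type1_neq[of r' B' C' C B, where 'a='a] d eq fin unfolding dd
      by simp
  next
    case 3
    then show ?thesis using column_type1_neq[of r B C C' B', where 'a='a] d eq fin unfolding dd
      by simp
  next
    case 4
    then have "B = B'" "C = C'"
      using eq fin unfolding dd
        by (simp_all add: column_r map_basis_vec_sorted_inject basis_sum_inject)
    moreover have "r = r'"
    proof -
      have "(r - 1) * t + 1 = (r' - 1) * t + 1" "2 \<le> r" "2 \<le> r'"
        using d 4 unfolding dd \<open>C = C'\<close> by (auto simp: mem_descriptors_iff)
      then show ?thesis using t_ge_2 by simp
    qed
    ultimately show ?thesis unfolding dd by simp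
  qed
qed


lemma descriptors_card_Un:
  assumes "(r, B, C) \<in> descriptors" "r \<noteq> 1"
  shows "card (B \<union> C) = r * t"
proof -
  have "2 \<le> r" "card B = t - 1" "card C = (r - 1) * t + 1"
    using assms by (auto simp: mem_descriptors_iff)
  moreover have "card (B \<union> C) = card B + card C"
    using assms(1) descriptors_finite_sets descriptors_disjoint by (blast intro: card_Un_disjoint)
  ultimately show ?thesis using t_ge_2 by (cases r) (auto simp: algebra_simps)
qed

lemma length_column:
  assumes "d \<in> descriptors"
  shows "length (column d) = t"
proof -
  obtain r B C where d: "d = (r, B, C)" using prod_cases3 by metis
  show ?thesis using assms t_ge_2 unfolding d by (auto simp: column_def mem_descriptors_iff)
qed

lemma column_support:
  assumes "d \<in> descriptors" "v \<in> set (column d)" "i \<notin> {1..s*t}"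
  shows "v i = 0"
proof -
  obtain r B C where d: "d = (r, B, C)" using prod_cases3 by metis
  have mem: "(r, B, C) \<in> descriptors" using assms(1) unfolding d .
  have "finite B" "finite C" using descriptors_finite_sets[OF mem] by auto
  moreover have "i \<notin> B \<union> C" using descriptors_subset[OF mem] assms(3) by blast
  ultimately show ?thesis
    using assms(2) unfolding d column_def
      by (auto simp: basis_vec_def basis_sum_apply split: if_splits)
qed

lemma column_spans:
  assumes "(r, B, C) \<in> descriptors"
  shows "basis_vec ` B \<subseteq> set (column (r, B, C))"
    and "basis_sum C \<in> lin_span (set (column (r, B, C)))"
proof -
  have fin: "finite B" "finite C" using descriptors_finite_sets[OF assms] by auto
  show "basis_vec ` B \<subseteq> set (column (r, B, C))"
    using assms fin by (auto simp: column_def mem_descriptors_iff)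
  show "basis_sum C \<in> lin_span (set (column (r, B, C)))"
  proof (cases "r = 1")
    case True
    then show ?thesis using fin by (intro basis_sum_in_lin_span) (simp_all add: column_def)
  next
    case False
    then show ?thesis by (intro lin_span_base) (simp add: column_r)
  qed
qed

lemma basis_vec_in_column:
  assumes "d \<in> descriptors" "cell_contains i d"
  shows "basis_vec i \<in> set (column d)"
proof -
  obtain r B C where d: "d = (r, B, C)" using prod_cases3 by metis
  have "finite C" using assms(1) descriptors_finite_sets unfolding d by auto
  then show ?thesis
    using assms(2) column_spans(1)[of r B C] assms(1)
    unfolding d by (auto simp: cell_contains_def column_def split: if_splits)
qed

lemma basis_vec_in_lin_span_pair:
  assumes "d \<in> descriptors" "d' \<in> descriptors" "avoids i d" "sum_contains i d'"
    and "avoid_key d = sum_key i d'"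
  shows "(basis_vec i :: nat \<Rightarrow> 'a::field) \<in> lin_span (set (column d) \<union> set (column d'))"
proof -
  obtain r B C r' B' C' where dd: "d = (r, B, C)" "d' = (r', B', C')"
    using prod_cases3 by metis
  let ?S = "set (column d :: (nat \<Rightarrow> 'a) list) \<union> set (column d')"
  have fin: "finite B" "finite C" "finite C'"
    using assms(1,2) descriptors_finite_sets unfolding dd by auto
  have r': "r' \<noteq> 1" "i \<in> C'" using assms(4) unfolding dd sum_contains_def by auto
  have key: "C' = {i} \<union> (B \<union> C)" "i \<notin> B \<union> C"
    using assms(5) r'(2) unfolding dd avoid_key_def sum_key_def by auto
  have "(basis_sum C' :: nat \<Rightarrow> 'a) = (\<lambda>x. basis_sum {i} x + basis_sum (B \<union> C) x)"
    unfolding key(1) by (rule basis_sum_Un) (use fin key(2) in auto)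
  moreover have "(basis_sum (B \<union> C) :: nat \<Rightarrow> 'a) = (\<lambda>x. basis_sum B x + basis_sum C x)"
    using fin descriptors_disjoint[of r B C] assms(1) unfolding dd by (intro basis_sum_Un) auto
  ultimately have sum_C': "(basis_sum C' :: nat \<Rightarrow> 'a)
      = (\<lambda>x. basis_vec i x + (basis_sum B x + basis_sum C x))"
    by (simp add: basis_sum_singleton)
  have "basis_sum C' \<in> lin_span ?S"
    using r'(1) unfolding dd by (intro lin_span_base) (simp add: column_r)
  moreover have "basis_sum B \<in> lin_span ?S"
    using column_spans(1)[of r B C] assms(1) fin unfolding dd by (intro basis_sum_in_lin_span) auto
  moreover have "basis_sum C \<in> lin_span ?S"
    using column_spans(2)[of r B C] assms(1) lin_span_mono[of "set (column d)" ?S] unfolding dd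
    by auto
  ultimately have "(\<lambda>x. basis_sum C' x - (basis_sum B x + basis_sum C x)) \<in> lin_span ?S"
    by (intro lin_span_diff lin_span_add)
  then show ?thesis unfolding sum_C' by simp
qed

lemma avoids_descriptors:
  assumes "(r, B, C) \<in> descriptors" "avoids i (r, B, C)" "i \<in> {1..s*t}"
  shows "i \<notin> B \<union> C" "r = 1 \<or> 2 \<le> r \<and> r < s"
proof -
  show i: "i \<notin> B \<union> C"
    using assms(1,2)
      by (auto simp: avoids_def cell_contains_def sum_contains_def mem_descriptors_iff)
  have "r \<noteq> s" if "r \<noteq> 1"
  proof
    assume "r = s"
    then have "card (B \<union> C) = card {1..s*t}" using descriptors_card_Un[OF assms(1) that] by simp
    then have "B \<union> C = {1..s*t}"
      using card_subset_eq[OF finite_atLeastAtMost descriptors_subset[OF assms(1)]] by simp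
    then show False using i assms(3) by blast
  qed
  then show "r = 1 \<or> 2 \<le> r \<and> r < s" using assms(1) by (auto simp: mem_descriptors_iff)
qed

lemma finite_key: "K \<subseteq> {1..s*t} - {i} \<Longrightarrow> finite K \<and> i \<notin> K"
  using finite_subset[of K "{1..s*t}"] by auto

section \<open>Matching avoiding columns with sum-cell columns\<close>

definition avoid_fibre :: "nat \<Rightarrow> nat set \<Rightarrow> (nat \<times> nat set \<times> nat set) set" where
  "avoid_fibre i K = {d \<in> descriptors. avoids i d \<and> avoid_key d = K}"

definition sum_fibre :: "nat \<Rightarrow> nat set \<Rightarrow> (nat \<times> nat set \<times> nat set) set" where
  "sum_fibre i K = {d \<in> descriptors. sum_contains i d \<and> sum_key i d = K}"

lemma fibre_key_shape:
  assumes "d \<in> avoid_fibre i K \<union> sum_fibre i K" "i \<in> {1..s*t}"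
  shows "\<exists>r. 1 \<le> r \<and> r < s \<and> card K = r * t \<and> K \<subseteq> {1..s*t} - {i}"
proof -
  obtain r B C where d: "d = (r, B, C)" using prod_cases3 by metis
  have mem: "(r, B, C) \<in> descriptors" using assms(1) unfolding d avoid_fibre_def sum_fibre_def
    by auto
  show ?thesis
  proof (cases "d \<in> avoid_fibre i K")
    case True
    then have avoid: "avoids i (r, B, C)" "K = B \<union> C"
      unfolding d avoid_fibre_def avoid_key_def by auto
    then have "K \<subseteq> {1..s*t} - {i}"
      using avoids_descriptors(1)[OF mem avoid(1) assms(2)] descriptors_subset[OF mem] by auto
    moreover have "card K = r * t" "1 \<le> r" "r < s"
      using avoids_descriptors(2)[OF mem avoid(1) assms(2)] descriptors_card_Un[OF mem] mem s_ge_2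
      unfolding avoid(2) by (auto simp: mem_descriptors_iff)
    ultimately show ?thesis by blast
  next
    case False
    then have "sum_contains i (r, B, C)" "K = C - {i}"
      using assms(1) unfolding d sum_fibre_def sum_key_def by auto
    then have "r \<noteq> 1" "i \<in> C" "K = C - {i}" by (auto simp: sum_contains_def)
    moreover have "finite C" using descriptors_finite_sets[OF mem] by simp
    ultimately show ?thesis
      using mem by (intro exI[of _ "r - 1"]) (auto simp: mem_descriptors_iff)
  qed
qed

lemma avoid_fibre_type1:
  assumes "card K = t" "K \<subseteq> {1..s*t} - {i}"
  shows "avoid_fibre i K = {(1, {}, K)}"
proof (intro set_eqI iffI)
  fix d :: "nat \<times> nat set \<times> nat set" assume "d \<in> avoid_fibre i K"
  moreover obtain r B C where d: "d = (r, B, C)" using prod_cases3 by metis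
  ultimately have mem: "(r, B, C) \<in> descriptors" and K: "K = B \<union> C"
    unfolding avoid_fibre_def avoid_key_def by auto
  have "r = 1"
  proof (rule ccontr)
    assume "r \<noteq> 1"
    then have "card K = r * t" "2 \<le> r" using descriptors_card_Un[OF mem] mem K
      by (auto simp: mem_descriptors_iff)
    then show False using assms(1) t_ge_2 by simp
  qed
  then show "d \<in> {(1, {}, K)}" using mem K unfolding d by (auto simp: mem_descriptors_iff)
next
  fix d :: "nat \<times> nat set \<times> nat set" assume "d \<in> {(1, {}, K)}"
  then show "d \<in> avoid_fibre i K"
    using assms by (auto simp: avoid_fibre_def mem_descriptors_iff avoids_def cell_contains_def
        sum_contains_def avoid_key_def)
qed

lemma avoid_fibre_typer:
  assumes "2 \<le> r" "r < s" "card K = r * t" "K \<subseteq> {1..s*t} - {i}"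
  shows "avoid_fibre i K = (\<lambda>B. (r, B, K - B)) ` {B. B \<subseteq> K \<and> card B = t - 1}"
proof (intro set_eqI iffI)
  fix d :: "nat \<times> nat set \<times> nat set" assume "d \<in> avoid_fibre i K"
  moreover obtain r' B C where d: "d = (r', B, C)" using prod_cases3 by metis
  ultimately have mem: "(r', B, C) \<in> descriptors" and K: "K = B \<union> C"
    unfolding avoid_fibre_def avoid_key_def by auto
  have "r' \<noteq> 1"
  proof
    assume "r' = 1"
    then have "card K = 1 * t" using mem K by (auto simp: mem_descriptors_iff)
    then show False using assms(1,3) t_ge_2 by simp
  qed
  then have "r' * t = r * t" using descriptors_card_Un[OF mem] K assms(3) by simp
  then have "r' = r" using t_ge_2 by simp
  moreover have "B \<subseteq> K" "card B = t - 1" "C = K - B"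
    using mem \<open>r' \<noteq> 1\<close> descriptors_disjoint[OF mem] K by (auto simp: mem_descriptors_iff)
  ultimately show "d \<in> (\<lambda>B. (r, B, K - B)) ` {B. B \<subseteq> K \<and> card B = t - 1}"
    unfolding d by auto
next
  fix d :: "nat \<times> nat set \<times> nat set" assume "d \<in> (\<lambda>B. (r, B, K - B)) ` {B. B \<subseteq> K \<and> card B = t - 1}"
  then obtain B where d: "d = (r, B, K - B)" and B: "B \<subseteq> K" "card B = t - 1" by blast
  have "finite K" using finite_key[OF assms(4)] by simp
  then have "card (K - B) = r * t - (t - 1)" using B assms(3)
    by (simp add: card_Diff_subset finite_subset)
  also have "\<dots> = (r - 1) * t + 1" using assms(1) t_ge_2 by (cases r) (auto simp: algebra_simps)
  finally have "(r, B, K - B) \<in> descriptors"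
    using assms B by (auto simp: mem_descriptors_iff)
  then show "d \<in> avoid_fibre i K"
    using assms(4) B unfolding d
    by (auto simp: avoid_fibre_def avoids_def cell_contains_def sum_contains_def avoid_key_def)
qed

lemma sum_fibre_eq:
  assumes "1 \<le> r" "r < s" "card K = r * t" "K \<subseteq> {1..s*t} - {i}" "i \<in> {1..s*t}"
  shows "sum_fibre i K
    = (\<lambda>B. (r + 1, B, insert i K)) ` {B. B \<subseteq> {1..s*t} - insert i K \<and> card B = t - 1}"
    (is "_ = ?F")
proof (intro set_eqI iffI)
  have K: "finite K" "i \<notin> K" using finite_key[OF assms(4)] by simp_all
  fix d :: "nat \<times> nat set \<times> nat set" assume "d \<in> sum_fibre i K"
  moreover obtain r' B C where d: "d = (r', B, C)" using prod_cases3 by metis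
  ultimately have mem: "(r', B, C) \<in> descriptors" and C: "r' \<noteq> 1" "i \<notin> B" "C = insert i K"
    unfolding sum_fibre_def sum_contains_def sum_key_def by auto
  have "(r' - 1) * t + 1 = r * t + 1" "2 \<le> r'"
    using mem C K assms(3) by (auto simp: mem_descriptors_iff)
  then have "r' = r + 1" using t_ge_2 by simp
  moreover have "B \<subseteq> {1..s*t} - insert i K" "card B = t - 1"
    using mem C by (auto simp: mem_descriptors_iff)
  ultimately show "d \<in> ?F" unfolding d C by auto
next
  have K: "finite K" "i \<notin> K" using finite_key[OF assms(4)] by simp_all
  fix d :: "nat \<times> nat set \<times> nat set" assume "d \<in> ?F"
  then obtain B where d: "d = (r + 1, B, insert i K)" "B \<subseteq> {1..s*t} - insert i K" "card B = t - 1"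
    by blast
  then show "d \<in> sum_fibre i K"
    using assms K by (auto simp: sum_fibre_def mem_descriptors_iff sum_contains_def sum_key_def)
qed

lemma card_As_containing: "i \<in> {1..s*t} \<Longrightarrow> card {A\<in>As. i \<in> A} = (s*t - 1) choose (t - 1)"
proof -
  assume i: "i \<in> {1..s*t}"
  have "{A\<in>As. i \<in> A} = {A. A \<subseteq> {1..s*t} \<and> card A = Suc (t - 1) \<and> i \<in> A}"
    unfolding As_def using t_ge_2 by auto
  then show ?thesis using card_subsets_containing[of "{1..s*t}" i "t - 1"] i by simp
qed

lemma card_Bs_containing: "i \<in> {1..s*t} \<Longrightarrow> card {B\<in>Bs. i \<in> B} = (s*t - 1) choose (t - 2)"
proof -
  assume i: "i \<in> {1..s*t}"
  have "{B\<in>Bs. i \<in> B} = {A. A \<subseteq> {1..s*t} \<and> card A = Suc (t - 2) \<and> i \<in> A}"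
    unfolding Bs_def using t_ge_2 by (auto simp: Suc_diff_Suc numeral_2_eq_2)
  then show ?thesis using card_subsets_containing[of "{1..s*t}" i "t - 2"] i by simp
qed

lemma card_Bs_avoiding: "i \<in> {1..s*t} \<Longrightarrow> card {B\<in>Bs. i \<notin> B} = (s*t - 1) choose (t - 1)"
proof -
  assume "i \<in> {1..s*t}"
  then have "card {B. B \<subseteq> {1..s*t} - {i} \<and> card B = t - 1} = (s*t - 1) choose (t - 1)"
    by (simp add: n_subsets)
  moreover have "{B\<in>Bs. i \<notin> B} = {B. B \<subseteq> {1..s*t} - {i} \<and> card B = t - 1}"
    unfolding Bs_def by auto
  ultimately show ?thesis by simp
qed

lemma card_complement_Bs: "B \<in> Bs \<Longrightarrow> card ({1..s*t} - B) = s*t - t + 1"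
proof -
  assume "B \<in> Bs"
  then have "card ({1..s*t} - B) = s*t - (t - 1)"
    unfolding Bs_def by (subst card_Diff_subset) (auto intro: finite_subset)
  moreover have "t \<le> s * t" using s_ge_2 by simp
  ultimately show ?thesis using t_ge_2 by (simp add: Suc_diff_le)
qed

lemma card_Cs:
  assumes "B \<in> Bs"
  shows "card (Cs r B) = (s*t - t + 1) choose ((r - 1) * t + 1)"
proof -
  have "card (Cs r B) = card ({1..s*t} - B) choose ((r - 1) * t + 1)"
    unfolding Cs_def by (rule n_subsets) simp
  then show ?thesis unfolding card_complement_Bs[OF assms] .
qed

lemma card_Cs_containing:
  assumes "B \<in> Bs" "i \<in> {1..s*t} - B"
  shows "card {C\<in>Cs r B. i \<in> C} = (s*t - t) choose ((r - 1) * t)"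
proof -
  have "{C\<in>Cs r B. i \<in> C} = {C. C \<subseteq> {1..s*t} - B \<and> card C = Suc ((r - 1) * t) \<and> i \<in> C}"
    unfolding Cs_def by auto
  then show ?thesis
    using card_subsets_containing[of "{1..s*t} - B" i "(r - 1) * t"] card_complement_Bs[OF assms(1)]
      assms(2) by simp
qed

end

locale theorem8_code = theorem8_descriptors +
  fixes xi :: "nat \<Rightarrow> nat" and cols :: "(nat \<Rightarrow> 'a::field) list list"
  assumes xi_rel: "\<forall>r. 2 \<le> r \<and> r \<le> s - 1 \<longrightarrow>
      ((s*t - t) choose ((r - 1) * t + 1)) * xi r = ((s*t - t) choose (r * t)) * xi (r + 1)"
    and xi_rel_1: "(s - 1) * xi 1 = ((s*t - t) choose t) * xi 2"
    and mset_cols: "mset cols = theorem8_columns s t xi"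
begin

lemma xi_1_eq: "xi 1 = ((s*t - t - 1) choose (t - 1)) * xi 2"
proof -
  have n: "s*t - t = (s - 1) * t" by (simp add: diff_mult_distrib)
  have "((s - 1) * t) * xi 1 = t * ((s - 1) * xi 1)" by simp
  also have "\<dots> = t * ((s*t - t) choose t) * xi 2" using xi_rel_1 by simp
  also have "\<dots> = ((s - 1) * t) * (((s*t - t - 1) choose (t - 1)) * xi 2)"
    using binomial_shift_absorb[of t "s*t - t"] t_ge_2 unfolding n by simp
  finally show ?thesis using s_ge_2 t_ge_2 by simp
qed

lemma xi_r_eq:
  assumes "2 \<le> r" "r < s"
  shows "((r*t) choose (t - 1)) * xi r = ((s*t - r*t - 1) choose (t - 1)) * xi (r + 1)"
proof -
  define n where "n = s*t - t"
  define k where "k = (r - 1) * t + 1"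
  have kt: "k + (t - 1) = r * t" "n - k = s*t - r*t - 1"
    using assms t_ge_2 unfolding k_def n_def by (cases r; simp add: algebra_simps)+
  have pos: "0 < n choose (r * t)"
  proof -
    have "r * t + t \<le> s * t" using assms by (metis Suc_leI add.commute mult_Suc mult_le_mono1)
    then show ?thesis unfolding n_def by simp
  qed
  have "(n choose (r * t)) * (((r*t) choose (t - 1)) * xi r)
      = ((n choose k) * xi r) * ((n - k) choose (t - 1))"
    using choose_mult_disjoint[of n k "t - 1"] unfolding kt by (simp add: algebra_simps)
  also have "\<dots> = (n choose (r * t)) * (((s*t - r*t - 1) choose (t - 1)) * xi (r + 1))"
    using xi_rel assms unfolding n_def k_def kt(2)[unfolded n_def k_def] by simp
  finally show ?thesis using pos by simp
qed

lemma avoid_fibre_weight: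
  assumes "1 \<le> r" "r < s" "card K = r * t" "K \<subseteq> {1..s*t} - {i}"
  shows "(\<Sum>d\<in>avoid_fibre i K. xi (fst d)) = (if r = 1 then xi 1 else ((r*t) choose (t - 1)) * xi r)"
proof (cases "r = 1")
  case True
  then show ?thesis using avoid_fibre_type1[of K i] assms by simp
next
  case False
  let ?Bs = "{B. B \<subseteq> K \<and> card B = t - 1}"
  have "finite K" using finite_key[OF assms(4)] by simp
  then have card: "card ?Bs = (r*t) choose (t - 1)" using assms(3) by (simp add: n_subsets)
  have r: "2 \<le> r" using assms(1) False by simp
  have "(\<Sum>d\<in>avoid_fibre i K. xi (fst d)) = (\<Sum>B\<in>?Bs. xi r)"
    unfolding avoid_fibre_typer[OF r assms(2-4)] by (subst sum.reindex) (auto simp: inj_on_def)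
  then show ?thesis using card False by simp
qed

lemma sum_fibre_weight:
  assumes "1 \<le> r" "r < s" "card K = r * t" "K \<subseteq> {1..s*t} - {i}" "i \<in> {1..s*t}"
  shows "(\<Sum>d\<in>sum_fibre i K. xi (fst d)) = ((s*t - r*t - 1) choose (t - 1)) * xi (r + 1)"
proof -
  let ?Bs = "{B. B \<subseteq> {1..s*t} - insert i K \<and> card B = t - 1}"
  have K: "finite K" "i \<notin> K" using finite_key[OF assms(4)] by simp_all
  have "card ({1..s*t} - insert i K) = s*t - r*t - 1"
    using assms K by (subst card_Diff_subset) auto
  then have card: "card ?Bs = (s*t - r*t - 1) choose (t - 1)"
    by (subst n_subsets) simp_all
  have "(\<Sum>d\<in>sum_fibre i K. xi (fst d)) = (\<Sum>B\<in>?Bs. xi (r + 1))"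
    unfolding sum_fibre_eq[OF assms] by (subst sum.reindex) (auto simp: inj_on_def)
  then show ?thesis using card by simp
qed

lemma fibre_weights_eq:
  assumes "i \<in> {1..s*t}"
  shows "(\<Sum>d\<in>avoid_fibre i K. xi (fst d)) = (\<Sum>d\<in>sum_fibre i K. xi (fst d))"
proof (cases "avoid_fibre i K \<union> sum_fibre i K = {}")
  case False
  then obtain r where r: "1 \<le> r" "r < s" "card K = r * t" "K \<subseteq> {1..s*t} - {i}"
    using fibre_key_shape assms by blast
  show ?thesis
  proof (cases "r = 1")
    case True
    then show ?thesis
      using avoid_fibre_weight[OF r] sum_fibre_weight[OF r assms] xi_1_eq unfolding True
      by (simp add: numeral_2_eq_2)
  next
    case False
    then show ?thesis
      using avoid_fibre_weight[OF r] sum_fibre_weight[OF r assms] xi_r_eq[of r] r by simp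
  qed
qed simp

definition descriptor_of :: "nat \<Rightarrow> nat \<times> nat set \<times> nat set" where
  "descriptor_of c = inv_into descriptors column (cols ! c)"

lemma mset_cols_eq: "mset cols = (\<Sum>d\<in>descriptors. replicate_mset (xi (fst d)) (column d))"
  unfolding mset_cols theorem8_columns_def Let_def sum_descriptors
  unfolding As_def Bs_def Cs_def
  by (intro arg_cong2[where f = "(+)"] sum.cong refl) (auto simp: column_def basis_sum_def)

lemma descriptor_of:
  assumes "c < length cols"
  shows "descriptor_of c \<in> descriptors" "column (descriptor_of c) = cols ! c"
proof -
  have "cols ! c \<in> set_mset (mset cols)" using assms by simp
  then have "cols ! c \<in> column ` descriptors"
    unfolding mset_cols_eq set_mset_sum[OF finite_descriptors] by (auto split: if_splits)
  then show "descriptor_of c \<in> descriptors" "column (descriptor_of c) = cols ! c"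
    unfolding descriptor_of_def by (auto intro: inv_into_into f_inv_into_f)
qed

definition columns_where :: "(nat \<times> nat set \<times> nat set \<Rightarrow> bool) \<Rightarrow> nat set" where
  "columns_where Q = {c. c < length cols \<and> Q (descriptor_of c)}"

lemma card_columns_where: "card (columns_where Q) = (\<Sum>d\<in>{d\<in>descriptors. Q d}. xi (fst d))"
proof -
  have "columns_where Q = {c. c < length cols \<and> cols ! c \<in> column ` {d\<in>descriptors. Q d}}"
  proof (intro set_eqI iffI)
    fix c assume "c \<in> columns_where Q"
    then show "c \<in> {c. c < length cols \<and> cols ! c \<in> column ` {d\<in>descriptors. Q d}}"
      using descriptor_of[of c] unfolding columns_where_def
        by (auto intro: image_eqI[of _ _ "descriptor_of c"])
  next
    fix c assume "c \<in> {c. c < length cols \<and> cols ! c \<in> column ` {d\<in>descriptors. Q d}}"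
    then obtain d where "c < length cols" "d \<in> descriptors" "Q d" "cols ! c = column d" by blast
    moreover have "descriptor_of c = d"
      using calculation inv_into_f_f[OF inj_on_column] unfolding descriptor_of_def by metis
    ultimately show "c \<in> columns_where Q" unfolding columns_where_def by simp
  qed
  then show ?thesis
    using card_nth_mem_image_sum_replicate[OF mset_cols_eq finite_descriptors inj_on_column] by simp
qed

lemma finite_columns_where: "finite (columns_where Q)"
  unfolding columns_where_def by simp

section \<open>Column counts and the rate\<close>

definition cell_count :: nat where
  "cell_count = xi 1 * ((s*t - 1) choose (t - 1)) +
     (\<Sum>r=2..s. xi r * (((s*t - 1) choose (t - 2)) * ((s*t - t + 1) choose ((r - 1) * t + 1))))"

definition sum_count :: nat where
  "sum_count = (\<Sum>r=2..s. xi r * (((s*t - 1) choose (t - 1)) * ((s*t - t) choose ((r - 1) * t))))"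

lemma card_columns_cell_contains:
  assumes "i \<in> {1..s*t}"
  shows "card (columns_where (cell_contains i)) = cell_count"
proof -
  have type1: "(\<Sum>A\<in>As. if cell_contains i (1, {}, A) then xi 1 else 0)
      = xi 1 * ((s*t - 1) choose (t - 1))"
    using card_As_containing[OF assms] by (simp add: cell_contains_def sum_if_const finite_As)
  have typer: "(\<Sum>B\<in>Bs. \<Sum>C\<in>Cs r B. if cell_contains i (r, B, C) then xi r else 0)
      = xi r * (((s*t - 1) choose (t - 2)) * ((s*t - t + 1) choose ((r - 1) * t + 1)))"
    if "r \<in> {2..s}" for r
  proof -
    have "(\<Sum>B\<in>Bs. \<Sum>C\<in>Cs r B. if cell_contains i (r, B, C) then xi r else 0)
        = (\<Sum>B\<in>Bs. if i \<in> B then ((s*t - t + 1) choose ((r - 1) * t + 1)) * xi r else 0)"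
      using that by (intro sum.cong refl) (simp add: cell_contains_def card_Cs)
    then show ?thesis
      using card_Bs_containing[OF assms] by (simp add: sum_if_const finite_Bs)
  qed
  have "(\<Sum>r=2..s. \<Sum>B\<in>Bs. \<Sum>C\<in>Cs r B. if cell_contains i (r, B, C) then xi r else 0)
      = (\<Sum>r=2..s. xi r * (((s*t - 1) choose (t - 2)) * ((s*t - t + 1) choose ((r - 1) * t + 1))))"
    by (rule sum.cong[OF refl]) (rule typer)
  then show ?thesis
    unfolding card_columns_where sum.inter_filter[OF finite_descriptors] sum_descriptors fst_conv
    unfolding type1 cell_count_def by simp
qed

lemma card_columns_sum_contains:
  assumes "i \<in> {1..s*t}"
  shows "card (columns_where (sum_contains i)) = sum_count"
proof -
  have type1: "(\<Sum>A\<in>As. if sum_contains i (1, {}, A) then xi 1 else 0) = 0"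
    by (simp add: sum_contains_def)
  have typer: "(\<Sum>B\<in>Bs. \<Sum>C\<in>Cs r B. if sum_contains i (r, B, C) then xi r else 0)
      = xi r * (((s*t - 1) choose (t - 1)) * ((s*t - t) choose ((r - 1) * t)))"
    if "r \<in> {2..s}" for r
  proof -
    have "(\<Sum>B\<in>Bs. \<Sum>C\<in>Cs r B. if sum_contains i (r, B, C) then xi r else 0)
        = (\<Sum>B\<in>Bs. if i \<notin> B then ((s*t - t) choose ((r - 1) * t)) * xi r else 0)"
    proof (rule sum.cong[OF refl])
      fix B assume "B \<in> Bs"
      then show "(\<Sum>C\<in>Cs r B. if sum_contains i (r, B, C) then xi r else 0)
          = (if i \<notin> B then ((s*t - t) choose ((r - 1) * t)) * xi r else 0)"
        using that card_Cs_containing[of B i r] assms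
        by (simp add: sum_contains_def sum_if_const finite_Cs)
    qed
    then show ?thesis
      using card_Bs_avoiding[OF assms] by (simp add: sum_if_const finite_Bs)
  qed
  have "(\<Sum>r=2..s. \<Sum>B\<in>Bs. \<Sum>C\<in>Cs r B. if sum_contains i (r, B, C) then xi r else 0)
      = (\<Sum>r=2..s. xi r * (((s*t - 1) choose (t - 1)) * ((s*t - t) choose ((r - 1) * t))))"
    by (rule sum.cong[OF refl]) (rule typer)
  then show ?thesis
    unfolding card_columns_where sum.inter_filter[OF finite_descriptors] sum_descriptors fst_conv
    unfolding type1 sum_count_def by simp
qed

lemma avoid_sum_matching:
  assumes "i \<in> {1..s*t}"
  obtains g where "bij_betw g (columns_where (avoids i)) (columns_where (sum_contains i))"
    and "\<And>a. a \<in> columns_where (avoids i) \<Longrightarrow> sum_key i (descriptor_of (g a)) = avoid_key (descriptor_of a)"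
proof -
  have "card {a \<in> columns_where (avoids i). avoid_key (descriptor_of a) = K}
      = card {b \<in> columns_where (sum_contains i). sum_key i (descriptor_of b) = K}" for K
  proof -
    have "card {a \<in> columns_where (avoids i). avoid_key (descriptor_of a) = K}
        = card (columns_where (\<lambda>d. avoids i d \<and> avoid_key d = K))"
      by (rule arg_cong[where f = card]) (auto simp: columns_where_def)
    also have "\<dots> = (\<Sum>d\<in>avoid_fibre i K. xi (fst d))"
      unfolding card_columns_where avoid_fibre_def ..
    also have "\<dots> = (\<Sum>d\<in>sum_fibre i K. xi (fst d))"
      by (rule fibre_weights_eq[OF assms])
    also have "\<dots> = card (columns_where (\<lambda>d. sum_contains i d \<and> sum_key i d = K))"
      unfolding card_columns_where sum_fibre_def ..
    also have "\<dots> = card {b \<in> columns_where (sum_contains i). sum_key i (descriptor_of b) = K}"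
      by (rule arg_cong[where f = card]) (auto simp: columns_where_def)
    finally show ?thesis .
  qed
  then obtain g where "bij_betw g (columns_where (avoids i)) (columns_where (sum_contains i))"
    "\<forall>a\<in>columns_where (avoids i). sum_key i (descriptor_of (g a)) = avoid_key (descriptor_of a)"
    using ex_bij_betw_equal_fibres[OF finite_columns_where[of "avoids i"]
        finite_columns_where[of "sum_contains i"], of "\<lambda>a. avoid_key (descriptor_of a)"
        "\<lambda>b. sum_key i (descriptor_of b)"]
    by blast
  then show ?thesis using that by blast
qed

lemma columns_partition:
  "{..<length cols} = columns_where (cell_contains i) \<union> columns_where (avoids i)
     \<union> columns_where (sum_contains i)"
  "columns_where (cell_contains i) \<inter> columns_where (avoids i) = {}"
  "(columns_where (cell_contains i) \<union> columns_where (avoids i)) \<inter> columns_where (sum_contains i) = {}"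
  unfolding columns_where_def avoids_def by (auto dest: sum_contains_not_cell_contains)

lemma has_disjoint_recovery_sets_cols:
  assumes "i \<in> {1..s*t}"
  shows "has_disjoint_recovery_sets cols i (cell_count + sum_count)"
proof -
  obtain g where g: "bij_betw g (columns_where (avoids i)) (columns_where (sum_contains i))"
    "\<And>a. a \<in> columns_where (avoids i) \<Longrightarrow> sum_key i (descriptor_of (g a)) = avoid_key (descriptor_of a)"
    using avoid_sum_matching[OF assms] by blast
  have "has_disjoint_recovery_sets cols i
      (card (columns_where (cell_contains i)) + card (columns_where (avoids i)))"
  proof (rule has_disjoint_recovery_sets_from_matching)
    show "inj_on g (columns_where (avoids i))" using g(1) by (rule bij_betw_imp_inj_on)
    show "g ` columns_where (avoids i)
        \<inter> (columns_where (cell_contains i) \<union> columns_where (avoids i)) = {}"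
      using columns_partition(3) bij_betw_imp_surj_on[OF g(1)] by blast
    show "columns_where (cell_contains i) \<union> columns_where (avoids i) \<union> g ` columns_where (avoids i)
        \<subseteq> {..<length cols}"
      using columns_partition(1) bij_betw_imp_surj_on[OF g(1)] by blast
    fix a
    show "recovers cols i {a}" if "a \<in> columns_where (cell_contains i)"
    proof -
      have a: "a < length cols" "cell_contains i (descriptor_of a)" using that
        by (simp_all add: columns_where_def)
      have "basis_vec i \<in> set (cols ! a)"
        using basis_vec_in_column[OF descriptor_of(1)[OF a(1)] a(2)] descriptor_of(2)[OF a(1)]
          by metis
      then show ?thesis unfolding recovers_def by (simp add: lin_span_base)
    qed
    show "recovers cols i {a, g a}" if a: "a \<in> columns_where (avoids i)"
    proof -
      have "g a \<in> columns_where (sum_contains i)" using a bij_betwE[OF g(1)] by blast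
      then have ga: "g a < length cols" "sum_contains i (descriptor_of (g a))"
        by (simp_all add: columns_where_def)
      have a': "a < length cols" "avoids i (descriptor_of a)" using a
        by (simp_all add: columns_where_def)
      have "(basis_vec i :: nat \<Rightarrow> 'a)
          \<in> lin_span (set (column (descriptor_of a)) \<union> set (column (descriptor_of (g a))))"
        by (rule basis_vec_in_lin_span_pair[OF descriptor_of(1)[OF a'(1)] descriptor_of(1)[OF ga(1)]
              a'(2) ga(2) g(2)[OF a, symmetric]])
      then show ?thesis unfolding recovers_def descriptor_of(2)[OF a'(1)] descriptor_of(2)[OF ga(1)]
        by simp
    qed
  qed (simp_all add: finite_columns_where columns_partition(2))
  moreover have "card (columns_where (avoids i)) = sum_count"
    using bij_betw_same_card[OF g(1)] card_columns_sum_contains[OF assms] by simp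
  ultimately show ?thesis using card_columns_cell_contains[OF assms] by simp
qed

lemma length_cols: "length cols = cell_count + 2 * sum_count"
proof -
  have i: "1 \<in> {1..s*t}" using s_ge_2 t_ge_2 by simp
  obtain g where "bij_betw g (columns_where (avoids 1)) (columns_where (sum_contains 1))"
    using avoid_sum_matching[OF i] by blast
  then have avoids: "card (columns_where (avoids 1)) = sum_count"
    using card_columns_sum_contains[OF i] by (simp add: bij_betw_same_card)
  have "length cols = card {..<length cols}" by simp
  also have "\<dots> = card (columns_where (cell_contains 1)) + card (columns_where (avoids 1))
      + card (columns_where (sum_contains 1))"
    unfolding columns_partition(1)[of 1] using columns_partition(2,3)[of 1]
    by (simp add: card_Un_disjoint finite_columns_where)
  finally show ?thesis using avoids card_columns_cell_contains[OF i] card_columns_sum_contains[OF i]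
    by simp
qed

lemma is_array_code_cols: "is_array_code t (s*t) cols"
  unfolding is_array_code_def
proof (intro ballI conjI allI impI)
  fix col assume "col \<in> set cols"
  then obtain c where c: "c < length cols" "col = cols ! c" by (metis in_set_conv_nth)
  then show "length col = t" using descriptor_of[OF c(1)] length_column by metis
  fix v i assume "v \<in> set col" "i \<notin> {1..s*t}"
  then show "v i = 0" using c descriptor_of[OF c(1)] column_support by metis
qed

lemma choose_absorb_st: "(s*t) * ((s*t - 1) choose (t - 1)) = ((s*t) choose (t - 1)) * (s*t - t + 1)"
proof -
  have "t \<le> s * t" using s_ge_2 by simp
  then have "s*t - (t - 1) = s*t - t + 1" using t_ge_2 by (simp add: Suc_diff_le)
  then show ?thesis using binomial_absorb_comp[of "s*t" "t - 1"] by (metis mult.commute)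
qed

lemma cell_count_scaled:
  "(s*t) * cell_count = ((s*t) choose (t - 1)) *
     (xi 1 * (s*t - t + 1) + (\<Sum>r=2..s. (t - 1) * xi r * ((s*t - t + 1) choose ((r - 1) * t + 1))))"
proof -
  let ?c = "(s*t) choose (t - 1)"
  have absorb: "(s*t) * ((s*t - 1) choose (t - 2)) = ?c * (t - 1)"
    using binomial_absorption[of "t - 2" "s*t"] t_ge_2
    by (simp add: mult.commute Suc_diff_Suc numeral_2_eq_2)
  have type1: "(s*t) * (xi 1 * ((s*t - 1) choose (t - 1))) = ?c * (xi 1 * (s*t - t + 1))"
  proof -
    have "(s*t) * (xi 1 * ((s*t - 1) choose (t - 1))) = xi 1 * ((s*t) * ((s*t - 1) choose (t - 1)))"
      by (simp only: ac_simps)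
    also have "\<dots> = ?c * (xi 1 * (s*t - t + 1))" unfolding choose_absorb_st by (simp only: ac_simps)
    finally show ?thesis .
  qed
  have typer: "(s*t) * (xi r * (((s*t - 1) choose (t - 2)) * X)) = ?c * ((t - 1) * xi r * X)" for r X
  proof -
    have "(s*t) * (xi r * (((s*t - 1) choose (t - 2)) * X)) = xi r * X * ((s*t) * ((s*t - 1) choose (t - 2)))"
      by (simp only: ac_simps)
    also have "\<dots> = ?c * ((t - 1) * xi r * X)" unfolding absorb by (simp only: ac_simps)
    finally show ?thesis .
  qed
  show ?thesis unfolding cell_count_def distrib_left sum_distrib_left type1 typer ..
qed

lemma sum_count_scaled:
  "(s*t) * sum_count = ((s*t) choose (t - 1)) *
     ((s*t - t + 1) * (\<Sum>r=1..s-1. xi (r + 1) * ((s*t - t) choose (r * t))))"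
proof -
  let ?c = "(s*t) choose (t - 1)"
  have summand: "(s*t) * (xi r * (((s*t - 1) choose (t - 1)) * X)) = ?c * ((s*t - t + 1) * (xi r * X))"
    for r X
  proof -
    have "(s*t) * (xi r * (((s*t - 1) choose (t - 1)) * X)) = xi r * X * ((s*t) * ((s*t - 1) choose (t - 1)))"
      by (simp only: ac_simps)
    also have "\<dots> = ?c * ((s*t - t + 1) * (xi r * X))" unfolding choose_absorb_st
      by (simp only: ac_simps)
    finally show ?thesis .
  qed
  have shift: "(\<Sum>r=2..s. xi r * ((s*t - t) choose ((r - 1) * t)))
      = (\<Sum>r=1..s-1. xi (r + 1) * ((s*t - t) choose (r * t)))"
  proof -
    have "{2..s} = {Suc 1..Suc (s - 1)}" using s_ge_2 by simp
    then have "(\<Sum>r=2..s. xi r * ((s*t - t) choose ((r - 1) * t)))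
        = (\<Sum>r=1..s-1. xi (Suc r) * ((s*t - t) choose ((Suc r - 1) * t)))"
      by (simp only: sum.shift_bounds_cl_Suc_ivl)
    then show ?thesis by simp
  qed
  have "(s*t) * sum_count = (\<Sum>r=2..s. ?c * ((s*t - t + 1) * (xi r * ((s*t - t) choose ((r - 1) * t)))))"
    unfolding sum_count_def sum_distrib_left summand ..
  also have "\<dots> = ?c * ((s*t - t + 1) * (\<Sum>r=2..s. xi r * ((s*t - t) choose ((r - 1) * t))))"
    by (simp only: sum_distrib_left)
  finally show ?thesis unfolding shift .
qed

lemma rate:
  "real (cell_count + sum_count) / real (length cols) =
     (let p = s * t;
          \<beta> = real (xi 1 * (p - t + 1)) +
              (\<Sum>r=2..s. real ((t - 1) * xi r * ((p - t + 1) choose ((r - 1) * t + 1))));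
          \<gamma> = real (p - t + 1) * (\<Sum>r=1..s-1. real (xi (r + 1) * ((p - t) choose (r * t))))
      in (\<beta> + \<gamma>) / (\<beta> + 2 * \<gamma>))"
proof -
  define c where "c = real ((s*t) choose (t - 1))"
  define q where "q = real (s*t) / c"
  have "t \<le> s * t" using s_ge_2 by simp
  then have "t - 1 \<le> s * t" by linarith
  then have c: "c > 0" unfolding c_def by simp
  have q: "q \<noteq> 0" unfolding q_def using c s_ge_2 t_ge_2 by simp
  define \<beta> where "\<beta> = real (xi 1 * (s*t - t + 1)) +
      (\<Sum>r=2..s. real ((t - 1) * xi r * ((s*t - t + 1) choose ((r - 1) * t + 1))))"
  define \<gamma> where "\<gamma> = real (s*t - t + 1) * (\<Sum>r=1..s-1. real (xi (r + 1) * ((s*t - t) choose (r * t))))"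
  have "c * \<beta> = real (s*t) * real cell_count"
    using arg_cong[OF cell_count_scaled, of real]
      unfolding \<beta>_def c_def of_nat_mult of_nat_add of_nat_sum
    by simp
  then have \<beta>: "\<beta> = q * real cell_count" unfolding q_def using c by (simp add: field_simps)
  have "c * \<gamma> = real (s*t) * real sum_count"
    using arg_cong[OF sum_count_scaled, of real] unfolding \<gamma>_def c_def of_nat_mult of_nat_sum
    by simp
  then have \<gamma>: "\<gamma> = q * real sum_count" unfolding q_def using c by (simp add: field_simps)
  have "(\<beta> + \<gamma>) / (\<beta> + 2 * \<gamma>) = (q * real (cell_count + sum_count)) / (q * real (cell_count + 2 * sum_count))"
    unfolding \<beta> \<gamma> by (simp add: algebra_simps)
  also have "\<dots> = real (cell_count + sum_count) / real (cell_count + 2 * sum_count)"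
    using q by (rule mult_divide_mult_cancel_left)
  finally show ?thesis unfolding Let_def length_cols \<beta>_def \<gamma>_def by simp
qed

end

theorem theorem8:
  fixes s t :: nat and \<xi> :: "nat \<Rightarrow> nat"
    and cols :: "(nat \<Rightarrow> 'a::{field,finite}) list list"
  assumes "s \<ge> 2" and "t \<ge> 2"
    and "\<forall>r\<in>{1..s}. \<xi> r > 0"
    and "\<forall>r. 2 \<le> r \<and> r \<le> s - 1 \<longrightarrow>
           ((s*t - t) choose ((r - 1) * t + 1)) * \<xi> r = ((s*t - t) choose (r * t)) * \<xi> (r + 1)"
    and "(s - 1) * \<xi> 1 = ((s*t - t) choose t) * \<xi> 2"
    and "mset cols = theorem8_columns s t \<xi>"
  shows "is_array_code t (s*t) cols \<and>
    (\<exists>k. is_kPIR (s*t) cols k \<and>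
      real k / real (length cols) =
        (let p = s * t;
             \<beta> = real (\<xi> 1 * (p - t + 1)) +
                 (\<Sum>r=2..s. real ((t - 1) * \<xi> r * ((p - t + 1) choose ((r - 1) * t + 1))));
             \<gamma> = real (p - t + 1) * (\<Sum>r=1..s-1. real (\<xi> (r + 1) * ((p - t) choose (r * t))))
         in (\<beta> + \<gamma>) / (\<beta> + 2 * \<gamma>)))"
proof -
  interpret theorem8_code s t \<xi> cols
    using assms(1,2,4-6) by unfold_locales
  have "is_kPIR (s*t) cols (cell_count + sum_count)"
    unfolding is_kPIR_iff using has_disjoint_recovery_sets_cols by blast
  then show ?thesis using is_array_code_cols rate by blast
qed

end
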